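(* Let $\{p^\circ_{(R,\alpha)}\}_{(R,\alpha)}$ be a replacement rule satisfying the Fixation Axiom and representing neutral drift. Then $\hat\Delta_{\mathrm{sel}}(\mathbf{x})=0$ for every state $\mathbf{x}\in\{0,1\}^G$. Furthermore, if $(\tilde v_g)_{g\in G}$ is any collection of real weights such that $$\tilde\Delta_{\mathrm{sel}}(\mathbf{x}):=\sum_{g,h\in G}x_g\big(e^\circ_{gh}\tilde v_h-e^\circ_{hg}\tilde v_g\big)=0\quad\text{for every state }\mathbf{x},$$ then $(\tilde v_g)_{g\in G}$ is a constant multiple of $(v_g)_{g\in G}$.
   Context: Setting. $G$ is a finite nonempty set of genetic sites, $n=|G|$; a state is $\mathbf{x}\in\{0,1\}^G$. A replacement event is $(R,\alpha)$ with $R\subseteq G$, $\alpha:R\to G$; a replacement rule gives for each state a probability distribution $\{p_{(R,\alpha)}(\mathbf{x})\}$ over events. The rule represents neutral drift if $p_{(R,\alpha)}(\mathbf{x})=p^\circ_{(R,\alpha)}$ is independent of $\mathbf{x}$ for every event. Fixation Axiom: there exist $g\in G$, $m\ge1$, events $(R_k,\alpha_k)_{k=1}^m$ with $p_{(R_k,\alpha_k)}>0$, $g\in R_k$ for some $k$, and $\tilde\alpha_1\circ\cdots\circ\tilde\alpha_m(h)=g$ for all $h\in G$, where $\tilde\alpha_k$ equals $\alpha_k$ on $R_k$ and the identity elsewhere. Quantities: $e^\circ_{gh}=\sum_{(R,\alpha):h\in R,\alpha(h)=g}p^\circ_{(R,\alpha)}$, $d^\circ_g=\sum_he^\circ_{hg}$.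 Reproductive values $(v_g)$: the unique solution of $d^\circ_gv_g=\sum_he^\circ_{gh}v_h$ for all $g\in G$ and $\sum_gv_g=n$. $\hat b_g=\sum_he^\circ_{gh}v_h$, $\hat d_g=v_gd^\circ_g$, $\hat\Delta_{\mathrm{sel}}(\mathbf{x})=\sum_gx_g(\hat b_g-\hat d_g)$. *)

theory Defs
  imports Complex_Main "HOL-Library.FuncSet"
begin

text \<open>A replacement event (R, alpha): R a subset of G, alpha : R -> G, represented
  as an extensional function on R (value undefined outside R).\<close>
type_synonym 'g event = "'g set \<times> ('g \<Rightarrow> 'g)"

definition events :: "'g set \<Rightarrow> 'g event set" where
  "events G = {(R, \<alpha>). R \<subseteq> G \<and> \<alpha> \<in> R \<rightarrow>\<^sub>E G}"

definition states :: "'g set \<Rightarrow> ('g \<Rightarrow> real) set" where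
  "states G = G \<rightarrow>\<^sub>E {0, 1}"

definition event_distribution :: "'g set \<Rightarrow> ('g event \<Rightarrow> real) \<Rightarrow> bool" where
  "event_distribution G q \<longleftrightarrow>
     (\<forall>E. 0 \<le> q E) \<and> (\<forall>E. E \<notin> events G \<longrightarrow> q E = 0) \<and> (\<Sum>E\<in>events G. q E) = 1"

definition replacement_rule :: "'g set \<Rightarrow> (('g \<Rightarrow> real) \<Rightarrow> 'g event \<Rightarrow> real) \<Rightarrow> bool" where
  "replacement_rule G p \<longleftrightarrow> (\<forall>x\<in>states G. event_distribution G (p x))"

definition neutral_drift ::
  "'g set \<Rightarrow> (('g \<Rightarrow> real) \<Rightarrow> 'g event \<Rightarrow> real) \<Rightarrow> ('g event \<Rightarrow> real) \<Rightarrow> bool" where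
  "neutral_drift G p p0 \<longleftrightarrow> (\<forall>x\<in>states G. \<forall>E. p x E = p0 E)"

definition tilde :: "'g event \<Rightarrow> 'g \<Rightarrow> 'g" where
  "tilde E h = (if h \<in> fst E then snd E h else h)"

text \<open>Fixation Axiom: tilde alpha_1 o ... o tilde alpha_m (list [E_1,...,E_m]).\<close>
definition fixation_axiom :: "'g set \<Rightarrow> (('g \<Rightarrow> real) \<Rightarrow> 'g event \<Rightarrow> real) \<Rightarrow> bool" where
  "fixation_axiom G p \<longleftrightarrow>
     (\<exists>g\<in>G. \<exists>Es :: 'g event list. length Es \<ge> 1 \<and>
        (\<forall>E\<in>set Es. E \<in> events G \<and> (\<forall>x\<in>states G. p x E > 0)) \<and>
        (\<exists>E\<in>set Es. g \<in> fst E) \<and>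
        (\<forall>h\<in>G. foldr (\<lambda>E f. tilde E \<circ> f) Es id h = g))"

definition e0 :: "'g set \<Rightarrow> ('g event \<Rightarrow> real) \<Rightarrow> 'g \<Rightarrow> 'g \<Rightarrow> real" where
  "e0 G p0 g h = (\<Sum>E\<in>{E\<in>events G. h \<in> fst E \<and> snd E h = g}. p0 E)"

definition d0 :: "'g set \<Rightarrow> ('g event \<Rightarrow> real) \<Rightarrow> 'g \<Rightarrow> real" where
  "d0 G p0 g = (\<Sum>h\<in>G. e0 G p0 h g)"

definition repro_values :: "'g set \<Rightarrow> ('g event \<Rightarrow> real) \<Rightarrow> 'g \<Rightarrow> real" where
  "repro_values G p0 = (THE v. v \<in> extensional G \<and>
      (\<forall>g\<in>G. d0 G p0 g * v g = (\<Sum>h\<in>G. e0 G p0 g h * v h)) \<and>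
      (\<Sum>g\<in>G. v g) = real (card G))"

definition b_hat :: "'g set \<Rightarrow> ('g event \<Rightarrow> real) \<Rightarrow> 'g \<Rightarrow> real" where
  "b_hat G p0 g = (\<Sum>h\<in>G. e0 G p0 g h * repro_values G p0 h)"

definition d_hat :: "'g set \<Rightarrow> ('g event \<Rightarrow> real) \<Rightarrow> 'g \<Rightarrow> real" where
  "d_hat G p0 g = repro_values G p0 g * d0 G p0 g"

definition Delta_sel_hat :: "'g set \<Rightarrow> ('g event \<Rightarrow> real) \<Rightarrow> ('g \<Rightarrow> real) \<Rightarrow> real" where
  "Delta_sel_hat G p0 x = (\<Sum>g\<in>G. x g * (b_hat G p0 g - d_hat G p0 g))"

end

theory Submission
  imports Defs "Jordan_Normal_Form.Determinant"
begin

(* Write L v = 0 for the balance equations d_g v_g = (SUM h. e_gh v_h), where d is the vector of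
   column sums of e. Then L has zero column sums, so it is singular and has a nonzero solution v.
   Since e is nonnegative, |v| is again a solution, and a nonnegative solution that vanishes at g
   vanishes at every h with e_gh > 0. The Fixation Axiom yields a site g0 reached from every site
   along such edges, so a solution vanishing at g0 vanishes identically: the solutions form a line,
   and normalising fixes the reproductive values. The selection term Delta_sel_hat is a combination
   of the balance residuals of v, hence zero; conversely, evaluating the weighted selection term
   on single-site states gives the balance equations for the weights. *)

lemma left_kernel_imp_kernel_nontrivial:
  fixes A :: "'a :: field mat"
  assumes A: "A \<in> carrier_mat n n"
    and u: "u \<in> carrier_vec n" "u \<noteq> 0\<^sub>v n" "transpose_mat A *\<^sub>v u = 0\<^sub>v n"
  shows "\<exists>w. w \<in> carrier_vec n \<and> w \<noteq> 0\<^sub>v n \<and> A *\<^sub>v w = 0\<^sub>v n"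
proof -
  have "det (transpose_mat A) = 0"
    using det_0_iff_vec_prod_zero_field[of "transpose_mat A" n] A u by auto
  then have "det A = 0" using det_transpose[OF A] by simp
  then show ?thesis using det_0_iff_vec_prod_zero_field[OF A] by blast
qed

lemma zero_column_sums_imp_kernel_nontrivial:
  fixes G :: "'g set" and a :: "'g \<Rightarrow> 'g \<Rightarrow> 'a :: field"
  assumes fin: "finite G" and ne: "G \<noteq> {}"
    and col: "\<And>h. h \<in> G \<Longrightarrow> (\<Sum>g\<in>G. a g h) = 0"
  shows "\<exists>v. (\<exists>h\<in>G. v h \<noteq> 0) \<and> (\<forall>g\<in>G. (\<Sum>h\<in>G. a g h * v h) = 0)"
proof -
  obtain xs where xs: "set xs = G" "distinct xs" using finite_distinct_list[OF fin] by blast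
  define n where "n = length xs"
  have n: "0 < n" using ne xs(1) n_def by auto
  have bij: "bij_betw ((!) xs) {..<n} G"
    using bij_betw_nth[OF xs(2) _ xs(1)[symmetric]] n_def by simp
  have reindex: "(\<Sum>h\<in>G. f h) = (\<Sum>j<n. f (xs ! j))" for f :: "'g \<Rightarrow> 'a"
    using sum.reindex_bij_betw[OF bij, of f] by simp
  define A where "A = mat n n (\<lambda>(i, j). a (xs ! i) (xs ! j))"
  have A: "A \<in> carrier_mat n n" unfolding A_def by simp
  have "transpose_mat A *\<^sub>v vec n (\<lambda>_. 1) = 0\<^sub>v n"
  proof (rule eq_vecI)
    fix i assume "i < dim_vec (0\<^sub>v n :: 'a vec)"
    then have i: "i < n" by simp
    have "(transpose_mat A *\<^sub>v vec n (\<lambda>_. 1)) $ i = (\<Sum>g\<in>G. a g (xs ! i))"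
      using i by (simp add: A_def scalar_prod_def reindex lessThan_atLeast0)
    also have "\<dots> = 0" using col i xs(1) n_def by auto
    finally show "(transpose_mat A *\<^sub>v vec n (\<lambda>_. 1)) $ i = 0\<^sub>v n $ i" using i by simp
  qed (simp add: A_def)
  moreover have "vec n (\<lambda>_. 1) \<noteq> (0\<^sub>v n :: 'a vec)"
    using n by (metis index_vec index_zero_vec(1) zero_neq_one)
  ultimately obtain w where w: "w \<in> carrier_vec n" "w \<noteq> 0\<^sub>v n" "A *\<^sub>v w = 0\<^sub>v n"
    using left_kernel_imp_kernel_nontrivial[OF A] by (meson vec_carrier)
  define v where "v h = w $ (inv_into {..<n} ((!) xs) h)" for h
  have v_nth: "v (xs ! i) = w $ i" if "i < n" for i
    using that bij by (simp add: v_def bij_betw_inv_into_left)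
  obtain i where i: "i < n" "w $ i \<noteq> 0"
    using w(1,2) by (metis eq_vecI carrier_vecD index_zero_vec(1,2))
  have "\<exists>h\<in>G. v h \<noteq> 0" using i v_nth xs(1) n_def by (metis nth_mem)
  moreover have "(\<Sum>h\<in>G. a g h * v h) = 0" if "g \<in> G" for g
  proof -
    obtain i where i: "i < n" "g = xs ! i" using \<open>g \<in> G\<close> xs(1) n_def by (metis in_set_conv_nth)
    have "(\<Sum>h\<in>G. a g h * v h) = (A *\<^sub>v w) $ i"
      using i w(1) by (simp add: reindex v_nth A_def scalar_prod_def lessThan_atLeast0)
    then show ?thesis using w(3) i by simp
  qed
  ultimately show ?thesis by blast
qed

definition balanced :: "'g set \<Rightarrow> ('g \<Rightarrow> 'g \<Rightarrow> real) \<Rightarrow> ('g \<Rightarrow> real) \<Rightarrow> bool" where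
  "balanced G e v \<longleftrightarrow> (\<forall>g\<in>G. (\<Sum>h\<in>G. e h g) * v g = (\<Sum>h\<in>G. e g h * v h))"

(* (h, g) is an edge when offspring of g can replace h. *)
definition parent_rel :: "'g set \<Rightarrow> ('g \<Rightarrow> 'g \<Rightarrow> real) \<Rightarrow> ('g \<times> 'g) set" where
  "parent_rel G e = {(h, g). h \<in> G \<and> g \<in> G \<and> 0 < e g h}"

definition common_ancestor :: "'g set \<Rightarrow> ('g \<Rightarrow> 'g \<Rightarrow> real) \<Rightarrow> 'g \<Rightarrow> bool" where
  "common_ancestor G e g0 \<longleftrightarrow> g0 \<in> G \<and> (\<forall>h\<in>G. (h, g0) \<in> (parent_rel G e)\<^sup>*)"

lemma balanced_cong:
  "(\<And>h. h \<in> G \<Longrightarrow> u h = v h) \<Longrightarrow> balanced G e u \<longleftrightarrow> balanced G e v"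
  unfolding balanced_def by (auto intro!: sum.cong)

lemma balanced_lincomb:
  assumes "balanced G e u" "balanced G e v"
  shows "balanced G e (\<lambda>h. a * u h + b * v h)"
  unfolding balanced_def
proof
  fix g assume g: "g \<in> G"
  have "(\<Sum>h\<in>G. e g h * (a * u h + b * v h))
      = a * (\<Sum>h\<in>G. e g h * u h) + b * (\<Sum>h\<in>G. e g h * v h)"
    by (simp add: algebra_simps sum.distrib sum_distrib_left)
  also have "\<dots> = (\<Sum>h\<in>G. e h g) * (a * u g + b * v g)"
    using assms g unfolding balanced_def by (simp add: algebra_simps)
  finally show "(\<Sum>h\<in>G. e h g) * (a * u g + b * v g) = (\<Sum>h\<in>G. e g h * (a * u h + b * v h))"
    by simp
qed

lemma balanced_nontrivial_exists:
  assumes "finite G" "G \<noteq> {}"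
  shows "\<exists>v. balanced G e v \<and> (\<exists>h\<in>G. v h \<noteq> 0)"
proof -
  define a where "a g h = e g h - (if g = h then (\<Sum>k\<in>G. e k h) else 0)" for g h
  have "(\<Sum>g\<in>G. a g h) = 0" if "h \<in> G" for h
    using that assms(1) by (simp add: a_def sum_subtractf)
  then obtain v where v: "\<exists>h\<in>G. v h \<noteq> 0" "\<forall>g\<in>G. (\<Sum>h\<in>G. a g h * v h) = 0"
    using zero_column_sums_imp_kernel_nontrivial[OF assms] by blast
  have "(\<Sum>h\<in>G. a g h * v h) = (\<Sum>h\<in>G. e g h * v h) - (\<Sum>h\<in>G. e h g) * v g" if "g \<in> G" for g
    using that assms(1)
    by (simp add: a_def left_diff_distrib sum_subtractf if_distrib[of "\<lambda>x. x * v _"] cong: if_cong)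
  then have "balanced G e v" using v(2) unfolding balanced_def by simp
  with v(1) show ?thesis by blast
qed

lemma balanced_abs:
  assumes fin: "finite G" and nonneg: "\<And>g h. 0 \<le> e g h" and bal: "balanced G e v"
  shows "balanced G e (\<lambda>h. \<bar>v h\<bar>)"
proof -
  define d where "d g = (\<Sum>h\<in>G. e h g)" for g
  define defect where "defect g = (\<Sum>h\<in>G. e g h * \<bar>v h\<bar>) - d g * \<bar>v g\<bar>" for g
  have "d g * \<bar>v g\<bar> \<le> (\<Sum>h\<in>G. e g h * \<bar>v h\<bar>)" if "g \<in> G" for g
  proof -
    have "d g * \<bar>v g\<bar> = \<bar>d g * v g\<bar>"
      using nonneg unfolding d_def by (simp add: abs_mult sum_nonneg)
    also have "\<dots> = \<bar>\<Sum>h\<in>G. e g h * v h\<bar>"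
      using bal that unfolding balanced_def d_def by simp
    also have "\<dots> \<le> (\<Sum>h\<in>G. e g h * \<bar>v h\<bar>)"
      using sum_abs[of "\<lambda>h. e g h * v h" G] nonneg by (simp add: abs_mult)
    finally show ?thesis .
  qed
  then have defect_nonneg: "\<forall>g\<in>G. 0 \<le> defect g" unfolding defect_def by simp
  \<comment> \<open>The defects sum to zero because d is the vector of column sums of e.\<close>
  have "(\<Sum>g\<in>G. \<Sum>h\<in>G. e g h * \<bar>v h\<bar>) = (\<Sum>h\<in>G. d h * \<bar>v h\<bar>)"
    unfolding d_def by (subst sum.swap) (simp add: sum_distrib_right)
  then have "(\<Sum>g\<in>G. defect g) = 0" unfolding defect_def by (simp add: sum_subtractf)
  then have "\<forall>g\<in>G. defect g = 0" using sum_nonneg_eq_0_iff[OF fin] defect_nonneg by blast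
  then show ?thesis unfolding balanced_def defect_def d_def by simp
qed

lemma balanced_nonneg_zero_at_ancestor:
  assumes fin: "finite G" and nonneg: "\<And>g h. 0 \<le> e g h"
    and bal: "balanced G e w" and w_nonneg: "\<forall>h\<in>G. 0 \<le> w h"
    and anc: "(h, g0) \<in> (parent_rel G e)\<^sup>*" and w0: "w g0 = 0"
  shows "w h = 0"
  using anc
proof (induction rule: converse_rtrancl_induct)
  case base
  then show ?case using w0 .
next
  case (step h g)
  then have h: "h \<in> G" and g: "g \<in> G" and e_pos: "0 < e g h"
    unfolding parent_rel_def by auto
  \<comment> \<open>At a zero of w the balance equation is a vanishing sum of nonnegative terms.\<close>
  have "(\<Sum>k\<in>G. e g k * w k) = 0"
    using bal g step.IH unfolding balanced_def by (metis mult_zero_right)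
  moreover have "\<forall>k\<in>G. 0 \<le> e g k * w k" using nonneg w_nonneg by simp
  ultimately have "e g h * w h = 0"
    using sum_nonneg_eq_0_iff[OF fin, of "\<lambda>k. e g k * w k"] h by simp
  then show ?case using e_pos by simp
qed

lemma balanced_zero_at_common_ancestor:
  assumes fin: "finite G" and nonneg: "\<And>g h. 0 \<le> e g h"
    and root: "common_ancestor G e g0" and bal: "balanced G e v" and v0: "v g0 = 0"
  shows "\<forall>h\<in>G. v h = 0"
proof
  fix h assume "h \<in> G"
  then have "(h, g0) \<in> (parent_rel G e)\<^sup>*" using root unfolding common_ancestor_def by blast
  then have "\<bar>v h\<bar> = 0"
    using balanced_nonneg_zero_at_ancestor[OF fin nonneg balanced_abs[OF fin nonneg bal]] v0
    by simp
  then show "v h = 0" by simp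
qed

lemma balanced_proportional:
  assumes fin: "finite G" and nonneg: "\<And>g h. 0 \<le> e g h"
    and root: "common_ancestor G e g0"
    and u: "balanced G e u" and v: "balanced G e v" and u0: "u g0 \<noteq> 0"
  shows "\<forall>h\<in>G. v h = (v g0 / u g0) * u h"
proof -
  have "balanced G e (\<lambda>h. (- (v g0 / u g0)) * u h + 1 * v h)"
    by (rule balanced_lincomb[OF u v])
  then have "\<forall>h\<in>G. - (v g0 / u g0) * u h + 1 * v h = 0"
    using u0 by (intro balanced_zero_at_common_ancestor[OF fin nonneg root]) auto
  then show ?thesis by simp
qed

lemma balanced_nonzero_at_common_ancestor:
  assumes "finite G" "\<And>g h. 0 \<le> e g h" "common_ancestor G e g0" "balanced G e v"
    and "(\<Sum>g\<in>G. v g) \<noteq> 0"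
  shows "v g0 \<noteq> 0"
  using balanced_zero_at_common_ancestor[OF assms(1-4)] assms(5) by auto

lemma balanced_normalized_unique:
  assumes fin: "finite G" and ne: "G \<noteq> {}" and nonneg: "\<And>g h. 0 \<le> e g h"
    and root: "common_ancestor G e g0"
  shows "\<exists>!v. v \<in> extensional G \<and> balanced G e v \<and> (\<Sum>g\<in>G. v g) = real (card G)"
proof -
  have card_pos: "0 < real (card G)" using fin ne by (simp add: card_gt_0_iff)
  obtain u where u: "balanced G e u" "\<exists>h\<in>G. u h \<noteq> 0"
    using balanced_nontrivial_exists[OF fin ne] by blast
  define S where "S = (\<Sum>h\<in>G. \<bar>u h\<bar>)"
  have "0 < S"
    using u(2) fin unfolding S_def by (metis abs_ge_zero sum_pos2 zero_less_abs_iff)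
  define r where "r = (\<lambda>h\<in>G. real (card G) / S * \<bar>u h\<bar>)"
  have "balanced G e (\<lambda>h. real (card G) / S * \<bar>u h\<bar> + 0 * \<bar>u h\<bar>)"
    using balanced_lincomb balanced_abs[OF fin nonneg u(1)] by blast
  then have r_bal: "balanced G e r" by (rule balanced_cong[THEN iffD1, rotated]) (simp add: r_def)
  have "(\<Sum>g\<in>G. r g) = real (card G) / S * S" by (simp add: r_def S_def sum_distrib_left)
  then have r_sum: "(\<Sum>g\<in>G. r g) = real (card G)" using \<open>0 < S\<close> by simp
  have "w = r" if w: "w \<in> extensional G" "balanced G e w" "(\<Sum>g\<in>G. w g) = real (card G)" for w
  proof (rule extensionalityI[OF w(1)])
    show "r \<in> extensional G" by (simp add: r_def)
    have "w g0 \<noteq> 0"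
      using balanced_nonzero_at_common_ancestor[OF fin nonneg root w(2)] w(3) card_pos by simp
    then have proportional: "\<forall>h\<in>G. r h = (r g0 / w g0) * w h"
      using balanced_proportional[OF fin nonneg root w(2) r_bal] by blast
    then have "(\<Sum>g\<in>G. r g) = (r g0 / w g0) * (\<Sum>g\<in>G. w g)"
      by (simp add: sum_distrib_left)
    then have "(r g0 / w g0) * real (card G) = 1 * real (card G)" using r_sum w(3) by simp
    then have "r g0 / w g0 = 1" using card_pos by (subst (asm) mult_right_cancel) auto
    then show "w h = r h" if "h \<in> G" for h using proportional that by simp
  qed
  then show ?thesis using r_bal r_sum by (auto simp: r_def)
qed

lemma finite_events: "finite G \<Longrightarrow> finite (events G)"
proof -
  assume fin: "finite G"
  have "events G = (\<Union>R\<in>Pow G. Pair R ` (R \<rightarrow>\<^sub>E G))" unfolding events_def by auto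
  then show ?thesis using fin by (auto intro!: finite_PiE finite_subset[OF _ fin])
qed

lemma tilde_in_sites: "E \<in> events G \<Longrightarrow> h \<in> G \<Longrightarrow> tilde E h \<in> G"
  unfolding tilde_def events_def by (auto simp: PiE_iff)

lemma e0_nonneg: "(\<And>E. 0 \<le> p0 E) \<Longrightarrow> 0 \<le> e0 G p0 g h"
  unfolding e0_def by (simp add: sum_nonneg)

lemma event_prob_le_e0:
  assumes "finite G" "\<And>E. 0 \<le> p0 E" "E \<in> events G" "h \<in> fst E"
  shows "p0 E \<le> e0 G p0 (snd E h) h"
  unfolding e0_def using assms
  by (intro member_le_sum) (auto intro: finite_subset[OF _ finite_events[OF assms(1)]])

lemma tilde_ancestor:
  assumes fin: "finite G" and nonneg: "\<And>E. 0 \<le> p0 E"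
    and E: "E \<in> events G" "0 < p0 E" and h: "h \<in> G"
  shows "(h, tilde E h) \<in> (parent_rel G (e0 G p0))\<^sup>*"
proof (cases "h \<in> fst E")
  case True
  then have "0 < e0 G p0 (tilde E h) h"
    using event_prob_le_e0[of G p0, OF fin nonneg E(1) True] E(2) unfolding tilde_def by simp
  then have "(h, tilde E h) \<in> parent_rel G (e0 G p0)"
    using tilde_in_sites[OF E(1) h] h unfolding parent_rel_def by simp
  then show ?thesis by blast
qed (simp add: tilde_def)

lemma foldr_tilde_ancestor:
  assumes fin: "finite G" and nonneg: "\<And>E. 0 \<le> p0 E"
    and Es: "\<forall>E\<in>set Es. E \<in> events G \<and> 0 < p0 E" and h: "h \<in> G"
  shows "foldr (\<lambda>E f. tilde E \<circ> f) Es id h \<in> G \<and>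
    (h, foldr (\<lambda>E f. tilde E \<circ> f) Es id h) \<in> (parent_rel G (e0 G p0))\<^sup>*"
  using Es
proof (induction Es)
  case (Cons E Es)
  let ?z = "foldr (\<lambda>E f. tilde E \<circ> f) Es id h"
  have E: "E \<in> events G" "0 < p0 E" and "\<forall>E\<in>set Es. E \<in> events G \<and> 0 < p0 E"
    using Cons.prems by auto
  then have z: "?z \<in> G" "(h, ?z) \<in> (parent_rel G (e0 G p0))\<^sup>*" using Cons.IH by blast+
  have "foldr (\<lambda>E f. tilde E \<circ> f) (E # Es) id h = tilde E ?z" by simp
  then show ?case
    using tilde_in_sites[OF E(1) z(1)] tilde_ancestor[of G p0, OF fin nonneg E z(1)] z(2)
    by (metis rtrancl_trans)
qed (simp add: h)

lemma zero_state: "(\<lambda>h\<in>G. 0) \<in> states G"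
  unfolding states_def by auto

lemma neutral_drift_distribution:
  "replacement_rule G p \<Longrightarrow> neutral_drift G p p0 \<Longrightarrow> event_distribution G p0"
proof -
  assume rule: "replacement_rule G p" and drift: "neutral_drift G p p0"
  have "p (\<lambda>h\<in>G. 0) = p0" using drift zero_state unfolding neutral_drift_def by blast
  then show ?thesis using rule zero_state unfolding replacement_rule_def by metis
qed

lemma fixation_common_ancestor:
  assumes fin: "finite G" and nonneg: "\<And>E. 0 \<le> p0 E"
    and drift: "neutral_drift G p p0" and fixation: "fixation_axiom G p"
  shows "\<exists>g0. common_ancestor G (e0 G p0) g0"
proof -
  obtain g0 Es where g0: "g0 \<in> G"
    and Es: "\<forall>E\<in>set Es. E \<in> events G \<and> (\<forall>x\<in>states G. 0 < p x E)"
    and fixes_g0: "\<forall>h\<in>G. foldr (\<lambda>E f. tilde E \<circ> f) Es id h = g0"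
    using fixation unfolding fixation_axiom_def by blast
  have "p (\<lambda>h\<in>G. 0) = p0" using drift zero_state unfolding neutral_drift_def by blast
  then have "\<forall>E\<in>set Es. E \<in> events G \<and> 0 < p0 E" using Es zero_state by blast
  then have "common_ancestor G (e0 G p0) g0"
    using foldr_tilde_ancestor[of G p0, OF fin nonneg] g0 fixes_g0
    unfolding common_ancestor_def by metis
  then show ?thesis ..
qed

lemma balanced_e0_iff:
  "balanced G (e0 G p0) v \<longleftrightarrow> (\<forall>g\<in>G. d0 G p0 g * v g = (\<Sum>h\<in>G. e0 G p0 g h * v h))"
  unfolding balanced_def d0_def ..

lemma selection_vanishes_imp_balanced:
  assumes fin: "finite G"
    and vanish: "\<forall>x\<in>states G. (\<Sum>g\<in>G. \<Sum>h\<in>G. x g * (e g h * v h - e h g * v g)) = 0"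
  shows "balanced G e v"
  unfolding balanced_def
proof
  fix g assume g: "g \<in> G"
  define x where "x = (\<lambda>k\<in>G. if k = g then 1 else 0 :: real)"
  have "x \<in> states G" unfolding x_def states_def by auto
  have "(\<Sum>k\<in>G. \<Sum>h\<in>G. x k * (e k h * v h - e h k * v k))
      = (\<Sum>k\<in>G. if k = g then (\<Sum>h\<in>G. e k h * v h - e h k * v k) else 0)"
    by (intro sum.cong) (auto simp: x_def)
  also have "\<dots> = (\<Sum>h\<in>G. e g h * v h) - (\<Sum>h\<in>G. e h g) * v g"
    using fin g by (simp add: sum_subtractf sum_distrib_right)
  finally show "(\<Sum>h\<in>G. e h g) * v g = (\<Sum>h\<in>G. e g h * v h)"
    using vanish \<open>x \<in> states G\<close> by simp
qed

lemma repro_values_balanced: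
  assumes "finite G" "G \<noteq> {}" "\<And>E. 0 \<le> p0 E" "common_ancestor G (e0 G p0) g0"
  shows "balanced G (e0 G p0) (repro_values G p0)"
    and "(\<Sum>g\<in>G. repro_values G p0 g) = real (card G)"
proof -
  have "\<exists>!v. v \<in> extensional G \<and> balanced G (e0 G p0) v \<and> (\<Sum>g\<in>G. v g) = real (card G)"
    using balanced_normalized_unique[OF assms(1,2) e0_nonneg[OF assms(3)] assms(4)] .
  from theI'[OF this]
  have "balanced G (e0 G p0) (repro_values G p0) \<and> (\<Sum>g\<in>G. repro_values G p0 g) = real (card G)"
    unfolding balanced_e0_iff repro_values_def[symmetric] by blast
  then show "balanced G (e0 G p0) (repro_values G p0)"
    and "(\<Sum>g\<in>G. repro_values G p0 g) = real (card G)" by blast+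
qed

lemma Delta_sel_hat_zero:
  "balanced G (e0 G p0) (repro_values G p0) \<Longrightarrow> Delta_sel_hat G p0 x = 0"
  unfolding Delta_sel_hat_def b_hat_def d_hat_def balanced_e0_iff by (simp add: mult.commute)

theorem theorem6:
  fixes G :: "'g set"
    and p :: "('g \<Rightarrow> real) \<Rightarrow> 'g event \<Rightarrow> real"
    and p0 :: "'g event \<Rightarrow> real"
  assumes "finite G" and "G \<noteq> {}"
    and "replacement_rule G p"
    and "neutral_drift G p p0"
    and "fixation_axiom G p"
  shows "(\<forall>x\<in>states G. Delta_sel_hat G p0 x = 0) \<and>
         (\<forall>vt :: 'g \<Rightarrow> real.
            (\<forall>x\<in>states G. (\<Sum>g\<in>G. \<Sum>h\<in>G. x g * (e0 G p0 g h * vt h - e0 G p0 h g * vt g)) = 0)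
            \<longrightarrow> (\<exists>c::real. \<forall>g\<in>G. vt g = c * repro_values G p0 g))"
proof -
  have p0_nonneg: "0 \<le> p0 E" for E
    using neutral_drift_distribution[OF assms(3,4)] by (cases E) (simp add: event_distribution_def)
  have e0_nonneg': "0 \<le> e0 G p0 g h" for g h by (rule e0_nonneg[OF p0_nonneg])
  obtain g0 where root: "common_ancestor G (e0 G p0) g0"
    using fixation_common_ancestor[of G p0, OF assms(1) p0_nonneg assms(4,5)] by blast
  note rv = repro_values_balanced[OF assms(1,2) p0_nonneg root]
  have "repro_values G p0 g0 \<noteq> 0"
    using balanced_nonzero_at_common_ancestor[OF assms(1) e0_nonneg' root rv(1)] rv(2) assms(1,2)
    by simp
  then have "\<exists>c. \<forall>g\<in>G. vt g = c * repro_values G p0 g" if "balanced G (e0 G p0) vt" for vt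
    using balanced_proportional[OF assms(1) e0_nonneg' root rv(1) that] by blast
  then show ?thesis
    using Delta_sel_hat_zero[OF rv(1)] selection_vanishes_imp_balanced[OF assms(1)] by blast
qed

end
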